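(* Let $n\ge1$. (i) Any $k\ge1$ points of $A_n$ have, altogether, at least $k$ coordinates that are not coordinates of any point of $D_{n-1}$. (ii) For any single point $a_i\in D_{n-1}$, any $k\ge1$ points of $A_n$ have, altogether, at least $k+1$ coordinates that are not coordinates of $a_i$.
   Context: Let $X_1,X_2,X_3$ be pairwise disjoint nonempty sets and $\Omega=X_1\times X_2\times X_3$, with projections $\Pi_i:\Omega\to X_i$. For $S\subset\Omega$, the coordinates of $S$ are the elements of $\Pi_1S\cup\Pi_2S\cup\Pi_3S$. Construction: fix pairwise distinct elements $x_1,y_1,\alpha_{5k-4},\alpha_{5k-1}$ ($k\ge1$) of $X_1$; pairwise distinct elements $x_2,y_2,\alpha_{5k-3},\alpha_{5k}$ ($k\ge1$) of $X_2$; pairwise distinct elements $x_3,z_3,\alpha_{5k-2}$ ($k\ge1$) of $X_3$. Set the convention $\alpha_{-3}:=y_2$, $\alpha_{-2}:=z_3$. Define $a_1=(x_1,x_2,x_3)$, $a_2=(y_1,y_2,x_3)$, $a_3=(y_1,x_2,z_3)$ and for $n\ge1$: $a_{5n-1}=(\alpha_{5n-4},\alpha_{5n-3},\alpha_{5n-2})$, $a_{5n}=(\alpha_{5n-1},\alpha_{5n},\alpha_{5n-2})$, $a_{5n+1}=(\alpha_{5n-4},\alpha_{5n},\alpha_{5n-7})$, $a_{5n+2}=(\alpha_{5n-1},\alpha_{5n-3},x_3)$, $a_{5n+3}=(x_1,\alpha_{5n-8},\alpha_{5n-2})$. Let $T=\{a_i:i\ge1\}$, $D_n=\{a_1,\dots,a_{5n+3}\}$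 for $n\ge0$, $A_0=D_0$ and $A_n=D_n\setminus D_{n-1}$ for $n\ge1$. *)

theory Defs
  imports Main
begin

text \<open>Points of \<Omega> = X1 \<times> X2 \<times> X3 are triples (p1, p2, p3); the sets X1, X2, X3 live in a
common type 'a (they are assumed pairwise disjoint in the theorem).\<close>

definition coords :: "('a \<times> 'a \<times> 'a) set \<Rightarrow> 'a set" where
  "coords S = (fst ` S) \<union> ((fst \<circ> snd) ` S) \<union> ((snd \<circ> snd) ` S)"

definition alph :: "'a \<Rightarrow> 'a \<Rightarrow> (nat \<Rightarrow> 'a) \<Rightarrow> int \<Rightarrow> 'a" where
  "alph y2 z3 al i = (if i = -3 then y2 else if i = -2 then z3 else al (nat i))"

text \<open>The points a_i, i >= 1.  For i >= 4 write n = (i+1) div 5, so that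
  i \<in> {5n-1, 5n, 5n+1, 5n+2, 5n+3}.\<close>
definition pt :: "'a \<Rightarrow> 'a \<Rightarrow> 'a \<Rightarrow> 'a \<Rightarrow> 'a \<Rightarrow> 'a \<Rightarrow> (nat \<Rightarrow> 'a) \<Rightarrow> nat \<Rightarrow> 'a \<times> 'a \<times> 'a" where
  "pt x1 y1 x2 y2 x3 z3 al i =
     (let \<alpha> = alph y2 z3 al; n = int ((i + 1) div 5) in
      if i = 1 then (x1, x2, x3)
      else if i = 2 then (y1, y2, x3)
      else if i = 3 then (y1, x2, z3)
      else if i mod 5 = 4 then (\<alpha> (5*n-4), \<alpha> (5*n-3), \<alpha> (5*n-2))
      else if i mod 5 = 0 then (\<alpha> (5*n-1), \<alpha> (5*n), \<alpha> (5*n-2))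
      else if i mod 5 = 1 then (\<alpha> (5*n-4), \<alpha> (5*n), \<alpha> (5*n-7))
      else if i mod 5 = 2 then (\<alpha> (5*n-1), \<alpha> (5*n-3), x3)
      else (x1, \<alpha> (5*n-8), \<alpha> (5*n-2)))"

definition Dset :: "'a \<Rightarrow> 'a \<Rightarrow> 'a \<Rightarrow> 'a \<Rightarrow> 'a \<Rightarrow> 'a \<Rightarrow> (nat \<Rightarrow> 'a) \<Rightarrow> nat \<Rightarrow> ('a \<times> 'a \<times> 'a) set" where
  "Dset x1 y1 x2 y2 x3 z3 al n = pt x1 y1 x2 y2 x3 z3 al ` {1 .. 5*n+3}"

definition Aset :: "'a \<Rightarrow> 'a \<Rightarrow> 'a \<Rightarrow> 'a \<Rightarrow> 'a \<Rightarrow> 'a \<Rightarrow> (nat \<Rightarrow> 'a) \<Rightarrow> nat \<Rightarrow> ('a \<times> 'a \<times> 'a) set" where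
  "Aset x1 y1 x2 y2 x3 z3 al n =
     (if n = 0 then Dset x1 y1 x2 y2 x3 z3 al 0
      else Dset x1 y1 x2 y2 x3 z3 al n - Dset x1 y1 x2 y2 x3 z3 al (n - 1))"

end

theory Submission
  imports Defs
begin

text \<open>
  Fix n \<ge> 1.  The points of A_n lie in block n, i.e. among the five points
  a_{5n-1}, ..., a_{5n+3}, whose coordinates include the five elements \<alpha>_{5n-4}, ..., \<alpha>_{5n}.
  These are fresh: every point of D_{n-1} only involves \<alpha>_t with t \<le> 5(n-1).  Each point
  of the block is assigned one of its fresh coordinates, injectively (a system of distinct
  representatives), and counting representatives gives (i), and also gives k coordinates
  avoiding any single earlier point p.  For (ii) one further coordinate of S is found that
  is neither a representative nor a coordinate of p.
\<close>

lemma coords_singleton [simp]: "coords {(u, v, w)} = {u, v, w}"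
  by (auto simp: coords_def)

lemma coords_image_iff: "x \<in> coords (f ` I) \<longleftrightarrow> (\<exists>i\<in>I. x \<in> coords {f i})"
  by (auto simp: coords_def)

lemma coords_point_subset: "s \<in> S \<Longrightarrow> coords {s} \<subseteq> coords S"
  by (auto simp: coords_def)

lemma finite_coords: "finite S \<Longrightarrow> finite (coords S)"
  by (simp add: coords_def)

lemma card_coords_diff_ge:
  assumes fin: "finite S" and inj: "inj_on r S"
    and rep: "\<And>s. s \<in> S \<Longrightarrow> r s \<in> coords {s} - E"
    and extra: "F \<subseteq> coords S - E" "F \<inter> r ` S = {}"
  shows "card S + card F \<le> card (coords S - E)"
proof -
  have fin_diff: "finite (coords S - E)" using finite_coords[OF fin] by simp
  have "r ` S \<subseteq> coords S - E" using rep coords_point_subset by blast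
  then have sub: "r ` S \<union> F \<subseteq> coords S - E" using extra(1) by blast
  have "card (r ` S \<union> F) = card S + card F"
    using card_Un_disjoint[of "r ` S" F] card_image[OF inj] extra(2) fin
      finite_subset[OF extra(1) fin_diff] by (simp add: Int_commute)
  with card_mono[OF fin_diff sub] show ?thesis by simp
qed

locale construction =
  fixes X1 X2 X3 :: "'a set" and x1 y1 x2 y2 x3 z3 :: 'a and al :: "nat \<Rightarrow> 'a"
  assumes disj: "X1 \<inter> X2 = {}" "X1 \<inter> X3 = {}" "X2 \<inter> X3 = {}"
    and mem1: "x1 \<in> X1" "y1 \<in> X1" "\<forall>k\<ge>1. al (5*k-4) \<in> X1 \<and> al (5*k-1) \<in> X1"
    and mem2: "x2 \<in> X2" "y2 \<in> X2" "\<forall>k\<ge>1. al (5*k-3) \<in> X2 \<and> al (5*k) \<in> X2"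
    and mem3: "x3 \<in> X3" "z3 \<in> X3" "\<forall>k\<ge>1. al (5*k-2) \<in> X3"
    and dist1: "x1 \<noteq> y1" "\<forall>k\<ge>1. al (5*k-4) \<notin> {x1, y1} \<and> al (5*k-1) \<notin> {x1, y1}"
      "inj_on al ({5*k-4 | k. k \<ge> 1} \<union> {5*k-1 | k. k \<ge> 1})"
    and dist2: "x2 \<noteq> y2" "\<forall>k\<ge>1. al (5*k-3) \<notin> {x2, y2} \<and> al (5*k) \<notin> {x2, y2}"
      "inj_on al ({5*k-3 | k. k \<ge> 1} \<union> {5*k | k. k \<ge> 1})"
    and dist3: "x3 \<noteq> z3" "\<forall>k\<ge>1. al (5*k-2) \<notin> {x3, z3}"
      "inj_on al {5*k-2 | k. k \<ge> 1}"
begin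

abbreviation a :: "nat \<Rightarrow> 'a \<times> 'a \<times> 'a" where "a \<equiv> pt x1 y1 x2 y2 x3 z3 al"
abbreviation \<alpha> :: "int \<Rightarrow> 'a" where "\<alpha> \<equiv> alph y2 z3 al"
abbreviation D :: "nat \<Rightarrow> ('a \<times> 'a \<times> 'a) set" where "D \<equiv> Dset x1 y1 x2 y2 x3 z3 al"
abbreviation A :: "nat \<Rightarrow> ('a \<times> 'a \<times> 'a) set" where "A \<equiv> Aset x1 y1 x2 y2 x3 z3 al"

definition idx1 :: "nat set" where "idx1 = {5*k-4 | k. k \<ge> 1} \<union> {5*k-1 | k. k \<ge> 1}"
definition idx2 :: "nat set" where "idx2 = {5*k-3 | k. k \<ge> 1} \<union> {5*k | k. k \<ge> 1}"
definition idx3 :: "nat set" where "idx3 = {5*k-2 | k. k \<ge> 1}"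

lemma alpha_class:
  assumes "1 \<le> j"
  shows "(j \<in> idx1 \<and> al j \<in> X1 \<and> al j \<notin> {x1, y1})
    \<or> (j \<in> idx2 \<and> al j \<in> X2 \<and> al j \<notin> {x2, y2})
    \<or> (j \<in> idx3 \<and> al j \<in> X3 \<and> al j \<notin> {x3, z3})"
proof -
  define k where "k = (j + 4) div 5"
  have k: "k \<ge> 1" using assms unfolding k_def by simp
  have "j = 5*k-4 \<or> j = 5*k-1 \<or> j = 5*k-3 \<or> j = 5*k \<or> j = 5*k-2"
    unfolding k_def by presburger
  then consider "j \<in> idx1" "j = 5*k-4 \<or> j = 5*k-1" | "j \<in> idx2" "j = 5*k-3 \<or> j = 5*k"
    | "j \<in> idx3" "j = 5*k-2"
    unfolding idx1_def idx2_def idx3_def using k by blast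
  then show ?thesis using k mem1(3) mem2(3) mem3(3) dist1(2) dist2(2) dist3(2) by cases metis+
qed

lemma alpha_eq_iff [simp]: "1 \<le> i \<Longrightarrow> 1 \<le> j \<Longrightarrow> al i = al j \<longleftrightarrow> i = j"
  using alpha_class[of i] alpha_class[of j] disj dist1(3) dist2(3) dist3(3)
  unfolding idx1_def[symmetric] idx2_def[symmetric] idx3_def[symmetric]
  by (auto dest: inj_onD)

lemma alpha_ne_fixed [simp]:
  assumes "1 \<le> j"
  shows "al j \<noteq> x1" "al j \<noteq> y1" "al j \<noteq> x2" "al j \<noteq> y2" "al j \<noteq> x3" "al j \<noteq> z3"
    and "x1 \<noteq> al j" "y1 \<noteq> al j" "x2 \<noteq> al j" "y2 \<noteq> al j" "x3 \<noteq> al j" "z3 \<noteq> al j"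
  using alpha_class[OF assms] disj mem1 mem2 mem3 by blast+

lemma fixed_ne [simp]: "x1 \<noteq> x2" "x1 \<noteq> y2" "y2 \<noteq> x1" "x1 \<noteq> x3" "x1 \<noteq> z3" "y2 \<noteq> x3" "y2 \<noteq> z3"
  using disj mem1 mem2 mem3 by blast+

lemma alpha_lag7: "1 \<le> m \<Longrightarrow> \<alpha> (5 * int m - 7) = (if m = 1 then z3 else al (5*m - 7))"
  by (simp add: alph_def nat_diff_distrib nat_mult_distrib)

lemma alpha_lag8: "1 \<le> m \<Longrightarrow> \<alpha> (5 * int m - 8) = (if m = 1 then y2 else al (5*m - 8))"
  by (simp add: alph_def nat_diff_distrib nat_mult_distrib)

lemma block_points:
  assumes "1 \<le> m"
  shows "a (5*m-1) = (al (5*m-4), al (5*m-3), al (5*m-2))"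
    and "a (5*m) = (al (5*m-1), al (5*m), al (5*m-2))"
    and "a (5*m+1) = (al (5*m-4), al (5*m), \<alpha> (5 * int m - 7))"
    and "a (5*m+2) = (al (5*m-1), al (5*m-3), x3)"
    and "a (5*m+3) = (x1, \<alpha> (5 * int m - 8), al (5*m-2))"
  using assms by (cases m; simp add: pt_def Let_def alph_def nat_add_distrib nat_mult_distrib)+

lemma initial_points: "a (Suc 0) = (x1, x2, x3)" "a 2 = (y1, y2, x3)" "a 3 = (y1, x2, z3)"
  by (simp_all add: pt_def)

lemma index_block_cases:
  fixes i :: nat
  assumes "4 \<le> i"
  obtains m where "1 \<le> m" "m = (i + 1) div 5"
    "i = 5*m-1 \<or> i = 5*m \<or> i = 5*m+1 \<or> i = 5*m+2 \<or> i = 5*m+3"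
proof
  show "1 \<le> (i + 1) div 5" using assms by simp
  show "i = 5*((i+1) div 5)-1 \<or> i = 5*((i+1) div 5) \<or> i = 5*((i+1) div 5)+1
      \<or> i = 5*((i+1) div 5)+2 \<or> i = 5*((i+1) div 5)+3"
    using assms by presburger
qed simp

lemma alpha_index_bound:
  assumes "1 \<le> i" "1 \<le> t" "al t \<in> coords {a i}"
  shows "t \<le> 5 * ((i + 1) div 5)"
proof (cases "i \<le> 3")
  case True
  then have "i = 1 \<or> i = 2 \<or> i = 3" using assms(1) by linarith
  then show ?thesis using assms(2,3) by (auto simp: initial_points)
next
  case False
  then obtain m where m: "1 \<le> m" "m = (i + 1) div 5"
    "i = 5*m-1 \<or> i = 5*m \<or> i = 5*m+1 \<or> i = 5*m+2 \<or> i = 5*m+3"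
    using index_block_cases[of i] by auto
  have "t \<le> 5*m" using m(1,3) assms(2,3) block_points[OF m(1)] alpha_lag7[OF m(1)]
      alpha_lag8[OF m(1)] by (elim disjE) (auto split: if_splits)
  then show ?thesis using m(2) by simp
qed

text \<open>The only points of D_{n-1} (indices i \<le> 5n-2) containing x1 are a_1 and the last
  points a_{5m+3} of the earlier blocks; none of them contains the lagging coordinate
  \<alpha>_{5n-8} of block n.\<close>

lemma lag8_not_beside_x1:
  assumes "1 \<le> n" "1 \<le> i" "i + 2 \<le> 5*n" "x1 \<in> coords {a i}"
  shows "\<alpha> (5 * int n - 8) \<notin> coords {a i}"
proof (cases "i \<le> 3")
  case True
  then have "i = 1 \<or> i = 2 \<or> i = 3" using assms(2) by linarith
  then show ?thesis using assms(1,4) dist1(1) dist2(1) by (auto simp: initial_points alpha_lag8)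
next
  case False
  then obtain m where m: "1 \<le> m" "m = (i + 1) div 5"
    "i = 5*m-1 \<or> i = 5*m \<or> i = 5*m+1 \<or> i = 5*m+2 \<or> i = 5*m+3"
    using index_block_cases[of i] by auto
  have "m < n" using m assms(3) by linarith
  then have indices: "5*n-8 \<noteq> 5*m-2" "5*n-8 \<noteq> 5*m-8" "1 \<le> 5*n-8" using m(1) by presburger+
  show ?thesis using m(1,3) assms(4) indices block_points[OF m(1)] alpha_lag7[OF m(1)]
      alpha_lag8[OF m(1)] alpha_lag8[OF assms(1)] \<open>m < n\<close>
    by (elim disjE) (auto split: if_splits)
qed

context
  fixes n :: nat
  assumes n_pos: "1 \<le> n"
begin

lemma fresh_alpha:
  assumes "5*n-4 \<le> t"
  shows "al t \<notin> coords (D (n - 1))"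
proof
  assume "al t \<in> coords (D (n - 1))"
  then obtain i where i: "1 \<le> i" "i \<le> 5*(n-1)+3" "al t \<in> coords {a i}"
    unfolding Dset_def coords_image_iff by auto
  have "t \<le> 5 * ((i + 1) div 5)" using alpha_index_bound[OF i(1) _ i(3)] assms n_pos by simp
  also have "\<dots> \<le> 5*(n-1)" using i(2) by presburger
  finally show False using assms n_pos by linarith
qed

definition block :: "('a \<times> 'a \<times> 'a) set" where
  "block = {(al (5*n-4), al (5*n-3), al (5*n-2)), (al (5*n-1), al (5*n), al (5*n-2)),
    (al (5*n-4), al (5*n), \<alpha> (5 * int n - 7)), (al (5*n-1), al (5*n-3), x3),
    (x1, \<alpha> (5 * int n - 8), al (5*n-2))}"

lemma new_points_in_block: "A n \<subseteq> block"
proof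
  fix s assume s: "s \<in> A n"
  then obtain i where i: "i \<in> {1..5*n+3}" "s = a i" using n_pos unfolding Aset_def Dset_def by auto
  have "i \<notin> {1..5*(n-1)+3}" using s i(2) n_pos unfolding Aset_def Dset_def by auto
  then have "i = 5*n-1 \<or> i = 5*n \<or> i = 5*n+1 \<or> i = 5*n+2 \<or> i = 5*n+3" using i(1) n_pos by auto
  then show "s \<in> block" using i(2) block_points[OF n_pos] unfolding block_def by auto
qed

text \<open>A system of distinct representatives for block n by fresh coordinates: a point whose
  third coordinate is \<alpha>_{5n-2} is represented by its first coordinate, or by \<alpha>_{5n-2}
  itself when the first coordinate is x1; any other point by its second coordinate.\<close>

definition rep :: "'a \<times> 'a \<times> 'a \<Rightarrow> 'a" where
  "rep s = (case s of (u, v, w) \<Rightarrow> if w = al (5*n-2) then (if u = x1 then w else u) else v)"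

text \<open>The third coordinate of a_{5n+1} is not \<alpha>_{5n-2}, so that point is represented by its
  second coordinate.\<close>

lemma lag7_ne_fresh: "\<alpha> (5 * int n - 7) \<noteq> al (5*n-2)"
  using n_pos by (auto simp: alpha_lag7)

lemma rep_block:
  "rep (al (5*n-4), al (5*n-3), al (5*n-2)) = al (5*n-4)"
  "rep (al (5*n-1), al (5*n), al (5*n-2)) = al (5*n-1)"
  "rep (al (5*n-4), al (5*n), \<alpha> (5 * int n - 7)) = al (5*n)"
  "rep (al (5*n-1), al (5*n-3), x3) = al (5*n-3)"
  "rep (x1, \<alpha> (5 * int n - 8), al (5*n-2)) = al (5*n-2)"
  using n_pos lag7_ne_fresh unfolding rep_def by auto

lemma rep_fresh:
  assumes "s \<in> block"
  shows "rep s \<in> coords {s}" "rep s \<in> al ` {5*n-4..5*n}"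
  using assms n_pos unfolding block_def by (auto simp: rep_block[simplified])

lemma rep_inj: "inj_on rep block"
  using n_pos unfolding inj_on_def block_def by (auto simp: rep_block[simplified])

lemma rep_not_earlier:
  assumes "s \<in> block"
  shows "rep s \<notin> coords (D (n - 1))"
  using rep_fresh(2)[OF assms] fresh_alpha by auto

lemma card_le_new_coords:
  assumes "S \<subseteq> A n"
  shows "card S \<le> card (coords S - coords (D (n - 1)))"
proof -
  have S: "S \<subseteq> block" using assms new_points_in_block by blast
  have "card S + card ({} :: 'a set) \<le> card (coords S - coords (D (n - 1)))"
  proof (rule card_coords_diff_ge)
    show "finite S" using S finite_subset unfolding block_def by blast
    show "inj_on rep S" using rep_inj S by (rule inj_on_subset)
    show "rep s \<in> coords {s} - coords (D (n - 1))" if "s \<in> S" for s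
      using that S rep_fresh(1) rep_not_earlier by blast
  qed auto
  then show ?thesis by simp
qed

text \<open>If S \<subseteq> block is nonempty and misses the last point (x1, \<alpha>_{5n-8}, \<alpha>_{5n-2}), then S
  also misses some point b of the block whose representative is nevertheless a coordinate
  of S: \<alpha>_{5n-2} if S contains one of the first two points, otherwise \<alpha>_{5n-4} or \<alpha>_{5n-1}.\<close>

lemma absent_point_rep_in_coords:
  assumes S: "S \<subseteq> block" "S \<noteq> {}" and last: "(x1, \<alpha> (5 * int n - 8), al (5*n-2)) \<notin> S"
  shows "\<exists>b \<in> block - S. rep b \<in> coords S"
proof -
  let ?b1 = "(al (5*n-4), al (5*n-3), al (5*n-2))"
  let ?b2 = "(al (5*n-1), al (5*n), al (5*n-2))"
  let ?b3 = "(al (5*n-4), al (5*n), \<alpha> (5 * int n - 7))"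
  let ?b4 = "(al (5*n-1), al (5*n-3), x3)"
  let ?b5 = "(x1, \<alpha> (5 * int n - 8), al (5*n-2))"
  consider (shared) "?b1 \<in> S \<or> ?b2 \<in> S" | (third) "?b3 \<in> S" "?b1 \<notin> S"
    | (fourth) "?b4 \<in> S" "?b2 \<notin> S"
    using S last unfolding block_def by blast
  then show ?thesis
  proof cases
    case shared
    then have "rep ?b5 \<in> coords S" using coords_point_subset rep_block(5) by fastforce
    then show ?thesis using last unfolding block_def by blast
  next
    case third
    then have "rep ?b1 \<in> coords S" using coords_point_subset rep_block(1) by fastforce
    then show ?thesis using third(2) unfolding block_def by blast
  next
    case fourth
    then have "rep ?b2 \<in> coords S" using coords_point_subset rep_block(2) by fastforce
    then show ?thesis using fourth(2) unfolding block_def by blast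
  qed
qed

text \<open>The key step for part (ii): besides the representatives, a nonempty S \<subseteq> block always
  has one more coordinate that is not a coordinate of the given earlier point p.  Either S
  contains the last point (x1, \<alpha>_{5n-8}, \<alpha>_{5n-2}), and p cannot contain both x1 and
  \<alpha>_{5n-8}; or the previous lemma applies.\<close>

lemma extra_coordinate:
  assumes p: "p \<in> D (n - 1)" and S: "S \<subseteq> block" "S \<noteq> {}"
  shows "\<exists>e. e \<in> coords S - coords {p} \<and> e \<notin> rep ` S"
proof (cases "(x1, \<alpha> (5 * int n - 8), al (5*n-2)) \<in> S")
  case True
  obtain i where i: "1 \<le> i" "i + 2 \<le> 5*n" "p = a i"
    using p n_pos unfolding Dset_def by auto
  have "x1 \<notin> al ` {5*n-4..5*n}" "\<alpha> (5 * int n - 8) \<notin> al ` {5*n-4..5*n}"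
    using n_pos by (auto simp: alpha_lag8)
  moreover have "rep ` S \<subseteq> al ` {5*n-4..5*n}" using S(1) rep_fresh(2) by blast
  ultimately have "x1 \<notin> rep ` S" "\<alpha> (5 * int n - 8) \<notin> rep ` S" by blast+
  moreover have "x1 \<in> coords S" "\<alpha> (5 * int n - 8) \<in> coords S"
    using coords_point_subset[OF True] by auto
  moreover have "x1 \<notin> coords {p} \<or> \<alpha> (5 * int n - 8) \<notin> coords {p}"
    using lag8_not_beside_x1[OF n_pos i(1,2)] i(3) by blast
  ultimately show ?thesis by blast
next
  case False
  then obtain b where b: "b \<in> block" "b \<notin> S" "rep b \<in> coords S"
    using absent_point_rep_in_coords[OF S] by blast
  have "rep b \<notin> rep ` S" using inj_on_image_mem_iff[OF rep_inj b(1) S(1)] b(2) by blast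
  moreover have "rep b \<notin> coords {p}"
    using rep_not_earlier[OF b(1)] coords_point_subset[OF p] by blast
  ultimately show ?thesis using b(3) by blast
qed

lemma card_gt_coords_off_earlier_point:
  assumes p: "p \<in> D (n - 1)" and S: "S \<subseteq> A n" "S \<noteq> {}"
  shows "card S + 1 \<le> card (coords S - coords {p})"
proof -
  have S_block: "S \<subseteq> block" using S(1) new_points_in_block by blast
  obtain e where e: "e \<in> coords S - coords {p}" "e \<notin> rep ` S"
    using extra_coordinate[OF p S_block S(2)] by blast
  have "card S + card {e} \<le> card (coords S - coords {p})"
  proof (rule card_coords_diff_ge)
    show "finite S" using S_block finite_subset unfolding block_def by blast
    show "inj_on rep S" using rep_inj S_block by (rule inj_on_subset)
    show "rep s \<in> coords {s} - coords {p}" if "s \<in> S" for s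
      using that S_block rep_fresh(1) rep_not_earlier coords_point_subset[OF p] by blast
  qed (use e in auto)
  then show ?thesis by simp
qed

end

end

theorem mainTheorem2:
  fixes X1 X2 X3 :: "'a set" and x1 y1 x2 y2 x3 z3 :: 'a and al :: "nat \<Rightarrow> 'a" and n :: nat
  assumes disj: "X1 \<inter> X2 = {}" "X1 \<inter> X3 = {}" "X2 \<inter> X3 = {}"
    and nonempty: "X1 \<noteq> {}" "X2 \<noteq> {}" "X3 \<noteq> {}"
    and mem1: "x1 \<in> X1" "y1 \<in> X1" "\<forall>k\<ge>1. al (5*k-4) \<in> X1 \<and> al (5*k-1) \<in> X1"
    and mem2: "x2 \<in> X2" "y2 \<in> X2" "\<forall>k\<ge>1. al (5*k-3) \<in> X2 \<and> al (5*k) \<in> X2"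
    and mem3: "x3 \<in> X3" "z3 \<in> X3" "\<forall>k\<ge>1. al (5*k-2) \<in> X3"
    and dist1: "x1 \<noteq> y1" "\<forall>k\<ge>1. al (5*k-4) \<notin> {x1, y1} \<and> al (5*k-1) \<notin> {x1, y1}"
      "inj_on al ({5*k-4 | k. k \<ge> 1} \<union> {5*k-1 | k. k \<ge> 1})"
    and dist2: "x2 \<noteq> y2" "\<forall>k\<ge>1. al (5*k-3) \<notin> {x2, y2} \<and> al (5*k) \<notin> {x2, y2}"
      "inj_on al ({5*k-3 | k. k \<ge> 1} \<union> {5*k | k. k \<ge> 1})"
    and dist3: "x3 \<noteq> z3" "\<forall>k\<ge>1. al (5*k-2) \<notin> {x3, z3}"
      "inj_on al {5*k-2 | k. k \<ge> 1}"
    and n1: "n \<ge> 1"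
  shows "(\<forall>S. S \<subseteq> Aset x1 y1 x2 y2 x3 z3 al n \<and> S \<noteq> {} \<longrightarrow>
            card (coords S - coords (Dset x1 y1 x2 y2 x3 z3 al (n - 1))) \<ge> card S)
       \<and> (\<forall>p \<in> Dset x1 y1 x2 y2 x3 z3 al (n - 1). \<forall>S. S \<subseteq> Aset x1 y1 x2 y2 x3 z3 al n \<and> S \<noteq> {} \<longrightarrow>
            card (coords S - coords {p}) \<ge> card S + 1)"
proof -
  interpret construction X1 X2 X3 x1 y1 x2 y2 x3 z3 al
    using disj mem1 mem2 mem3 dist1 dist2 dist3 by unfold_locales
  show ?thesis
    using card_le_new_coords[OF n1] card_gt_coords_off_earlier_point[OF n1] by blast
qed

end
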